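(* If $0\le\Delta<1$ and $0<\gamma<\frac{2(1+\Delta)}{\zeta\sigma_{\max}^2}$, then $\lambda_{2,\max}<1$.
   Context: $\sigma_1^2\ge\dots\ge\sigma_n^2\ge0$ are the eigenvalues of $\boldsymbol A\boldsymbol A^T$ for $\boldsymbol A\in\mathbb R^{n\times d}$, $\sigma_{\max}^2$ the largest; $\zeta\in(0,1]$. For $j\in[n]$: $\Omega_j=1-\gamma\zeta\sigma_j^2+\Delta$ and $\lambda_{2,j}=\frac{-2\Delta+\Omega_j^2+\sqrt{\Omega_j^2(\Omega_j^2-4\Delta)}}{2}$ (complex square root if the argument is negative). $\lambda_{2,\max}=\max\{|\lambda_{2,j}|:\sigma_j^2>0\}$. *)

theory Defs
  imports "HOL-Analysis.Analysis"
begin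

definition is_eigenvalue :: "real^'n^'n \<Rightarrow> real \<Rightarrow> bool" where
  "is_eigenvalue M s \<longleftrightarrow> (\<exists>v. v \<noteq> 0 \<and> M *v v = s *\<^sub>R v)"

definition sigma_max_sq :: "real^'d^'n \<Rightarrow> real" where
  "sigma_max_sq A = Max {s. is_eigenvalue (A ** transpose A) s}"

definition Omega :: "real \<Rightarrow> real \<Rightarrow> real \<Rightarrow> real \<Rightarrow> real" where
  "Omega \<gamma> \<zeta> \<Delta> s = 1 - \<gamma> * \<zeta> * s + \<Delta>"

text \<open>lambda_{2,j} as a function of the eigenvalue s = sigma_j^2 (complex square root).\<close>
definition lambda2 :: "real \<Rightarrow> real \<Rightarrow> real \<Rightarrow> real \<Rightarrow> complex" where
  "lambda2 \<gamma> \<zeta> \<Delta> s =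
     (let \<Omega> = Omega \<gamma> \<zeta> \<Delta> s in
      (complex_of_real (-2 * \<Delta> + \<Omega>^2) + csqrt (complex_of_real (\<Omega>^2 * (\<Omega>^2 - 4 * \<Delta>)))) / 2)"

definition lambda2_max :: "real^'d^'n \<Rightarrow> real \<Rightarrow> real \<Rightarrow> real \<Rightarrow> real" where
  "lambda2_max A \<gamma> \<zeta> \<Delta> =
     Max ((\<lambda>s. cmod (lambda2 \<gamma> \<zeta> \<Delta> s)) ` {s. is_eigenvalue (A ** transpose A) s \<and> s > 0})"

end

theory Submission
  imports Defs
begin

(* With \<Omega> = 1 - \<gamma>\<zeta>\<sigma>\<^sup>2 + \<Delta>, the number \<lambda>\<^sub>2 is the square of \<mu> = (|\<Omega>| + \<surd>(\<Omega>\<^sup>2 - 4\<Delta>)) / 2, a root of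
   z\<^sup>2 - |\<Omega>| z + \<Delta>.  If this root is not real then |\<mu>|\<^sup>2 = \<Delta> < 1; if it is real then \<mu> < 1
   amounts to \<surd>(\<Omega>\<^sup>2 - 4\<Delta>) < 2 - |\<Omega>|, i.e. to |\<Omega>| < 1 + \<Delta>, i.e. to 0 < \<gamma>\<zeta>\<sigma>\<^sup>2 < 2(1 + \<Delta>),
   which the step-size bound guarantees for every 0 < \<sigma>\<^sup>2 \<le> \<sigma>\<^sub>m\<^sub>a\<^sub>x\<^sup>2.  That the maxima involved are
   attained rests on A A\<^sup>T being symmetric: it has finitely many eigenvalues, and at least one. *)

lemma nonneg_self_adjoint_form_zero_imp_zero:
  fixes f :: "'a::real_inner \<Rightarrow> 'a"
  assumes "linear f" and self_adjoint: "\<And>x y. x \<bullet> f y = f x \<bullet> y"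
    and nonneg: "\<And>x. 0 \<le> x \<bullet> f x" and "x \<bullet> f x = 0"
  shows "f x = 0"
proof -
  define w where "w = f x"
  define c where "c = w \<bullet> f w"
  have "0 \<le> c" using nonneg by (simp add: c_def)
  have xw: "x \<bullet> f w = w \<bullet> w" using self_adjoint[of x w] by (simp add: w_def)
  have wx: "w \<bullet> f x = w \<bullet> w" by (simp add: w_def)
  (* moving from x against f x makes the form negative to first order in t unless f x = 0 *)
  have expand: "(x - t *\<^sub>R w) \<bullet> f (x - t *\<^sub>R w) = - 2 * t * (w \<bullet> w) + t\<^sup>2 * c" for t
  proof -
    have "(x - t *\<^sub>R w) \<bullet> f (x - t *\<^sub>R w) = x \<bullet> f x - t * (w \<bullet> w) - t * (w \<bullet> w) + t * t * c"
      using xw wx by (simp add: linear_diff[OF assms(1)] linear_scale[OF assms(1)] inner_diff_left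
          inner_diff_right c_def right_diff_distrib)
    then show ?thesis using assms(4) by (simp add: power2_eq_square)
  qed
  have "2 * (w \<bullet> w) \<le> 0 + e" if "0 < e" for e
  proof -
    define t where "t = e / (c + 1)"
    have "0 < t" using \<open>0 < e\<close> \<open>0 \<le> c\<close> by (simp add: t_def)
    have "t * (2 * (w \<bullet> w)) \<le> t * (t * c)"
      using nonneg[of "x - t *\<^sub>R w"] by (simp add: expand power2_eq_square)
    then have "2 * (w \<bullet> w) \<le> t * c" using \<open>0 < t\<close> by simp
    also have "t * c \<le> e"
      using \<open>0 < e\<close> \<open>0 \<le> c\<close> by (simp add: t_def field_simps)
    finally show ?thesis by simp
  qed
  then have "2 * (w \<bullet> w) \<le> 0" by (rule field_le_epsilon)
  then have "w \<bullet> w = 0" using inner_ge_zero[of w] by linarith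
  then show ?thesis by (simp add: w_def)
qed

lemma inner_matrix_vector_mul_symmetric:
  fixes M :: "real^'n^'n"
  assumes "transpose M = M"
  shows "x \<bullet> (M *v y) = (M *v x) \<bullet> y"
  by (metis assms dot_lmul_matrix vector_transpose_matrix)

lemma symmetric_matrix_has_eigenvalue:
  fixes M :: "real^'n^'n"
  assumes "transpose M = M"
  shows "\<exists>s. is_eigenvalue M s"
proof -
  define q where "q x = x \<bullet> (M *v x)" for x :: "real^'n"
  have "continuous_on (sphere 0 1) q"
    unfolding q_def by (intro continuous_intros linear_continuous_on matrix_vector_mul_bounded_linear)
  moreover have "sphere (0::real^'n) 1 \<noteq> {}" by simp
  ultimately obtain v where v: "v \<in> sphere 0 1" and v_max: "\<And>y. y \<in> sphere 0 1 \<Longrightarrow> q y \<le> q v"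
    using continuous_attains_sup[OF compact_sphere] by blast
  define l where "l = q v"
  have q_le: "q x \<le> l * (x \<bullet> x)" for x
  proof (cases "x = 0")
    case False
    have "q ((1 / norm x) *\<^sub>R x) \<le> l"
      using v_max False by (simp add: l_def)
    then show ?thesis
      using False by (simp add: q_def matrix_vector_mult_scaleR power2_norm_eq_inner[symmetric]
          divide_le_eq power2_eq_square mult.commute)
  qed (simp add: q_def)
  (* l I - M is positive semidefinite and its quadratic form vanishes at the maximiser v *)
  define f where "f x = l *\<^sub>R x - M *v x" for x
  have "linear f"
    unfolding f_def by (intro linear_compose_sub linear_scaleR matrix_vector_mul_linear)
  moreover have "x \<bullet> f y = f x \<bullet> y" for x y
    using inner_matrix_vector_mul_symmetric[OF assms]
    by (simp add: f_def inner_diff_left inner_diff_right inner_commute)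
  moreover have "0 \<le> x \<bullet> f x" for x
    using q_le[of x] by (simp add: f_def q_def inner_diff_right)
  moreover have "v \<bullet> f v = 0"
    using v by (simp add: f_def l_def q_def inner_diff_right dot_square_norm)
  ultimately have "f v = 0" by (rule nonneg_self_adjoint_form_zero_imp_zero)
  then have "M *v v = l *\<^sub>R v" by (simp add: f_def)
  moreover have "v \<noteq> 0" using v by auto
  ultimately show ?thesis unfolding is_eigenvalue_def by blast
qed

lemma finite_eigenvalues_symmetric_matrix:
  fixes M :: "real^'n^'n"
  assumes "transpose M = M"
  shows "finite {s. is_eigenvalue M s}"
proof -
  define S where "S = {s. is_eigenvalue M s}"
  have "\<forall>s\<in>S. \<exists>v. v \<noteq> 0 \<and> M *v v = s *\<^sub>R v"
    by (simp add: S_def is_eigenvalue_def)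
  then obtain u where u: "\<And>s. s \<in> S \<Longrightarrow> u s \<noteq> 0 \<and> M *v u s = s *\<^sub>R u s"
    by metis
  have "u s \<bullet> u t = 0" if "s \<in> S" "t \<in> S" "s \<noteq> t" for s t
  proof -
    have "s * (u s \<bullet> u t) = (M *v u s) \<bullet> u t" using u[OF that(1)] by simp
    also have "\<dots> = u s \<bullet> (M *v u t)" by (rule inner_matrix_vector_mul_symmetric[OF assms, symmetric])
    also have "\<dots> = t * (u s \<bullet> u t)" using u[OF that(2)] by simp
    finally show ?thesis using that(3) by simp
  qed
  then have "pairwise orthogonal (u ` S)"
    unfolding pairwise_def orthogonal_def by auto
  moreover have "0 \<notin> u ` S" using u by auto
  ultimately have "finite (u ` S)"
    using pairwise_orthogonal_independent finiteI_independent by blast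
  moreover have "inj_on u S"
  proof (rule inj_onI)
    fix s t assume "s \<in> S" "t \<in> S" "u s = u t"
    then have "s *\<^sub>R u s = t *\<^sub>R u s" using u by metis
    then show "s = t" using u[OF \<open>s \<in> S\<close>] by simp
  qed
  ultimately show ?thesis unfolding S_def[symmetric] using finite_imageD by blast
qed

lemma csqrt_of_real_square_mult:
  fixes c x :: real
  shows "csqrt (of_real (c\<^sup>2 * x)) = of_real \<bar>c\<bar> * csqrt (of_real x)"
proof (cases "c = 0")
  case False
  then show ?thesis
    by (simp only: csqrt_of_real') (simp add: abs_mult real_sqrt_mult zero_le_mult_iff)
qed simp

(* (b + csqrt (b\<^sup>2 - 4\<Delta>)) / 2 is a root of z\<^sup>2 - b z + \<Delta> *)
lemma cmod_quadratic_root_less_1: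
  fixes b \<Delta> :: real
  assumes "0 \<le> \<Delta>" "\<Delta> < 1" "0 \<le> b" "b < 1 + \<Delta>"
  shows "cmod ((of_real b + csqrt (of_real (b\<^sup>2 - 4 * \<Delta>))) / 2) < 1"
proof (cases "4 * \<Delta> \<le> b\<^sup>2")
  case True
  have "b\<^sup>2 - 4 * \<Delta> < (2 - b)\<^sup>2"
    using assms by (simp add: power2_diff)
  then have "sqrt (b\<^sup>2 - 4 * \<Delta>) < 2 - b"
    using assms by (simp add: real_less_lsqrt)
  then show ?thesis
    using True assms by (simp add: csqrt_of_real flip: of_real_add of_real_divide)
next
  case False
  then have "csqrt (of_real (b\<^sup>2 - 4 * \<Delta>)) = \<i> * of_real (sqrt (4 * \<Delta> - b\<^sup>2))"
    by (simp add: csqrt_of_real')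
  then have "(cmod ((of_real b + csqrt (of_real (b\<^sup>2 - 4 * \<Delta>))) / 2))\<^sup>2 = \<Delta>"
    using False assms by (simp add: cmod_def power_divide field_simps)
  then show ?thesis
    using assms(2) by (metis abs_norm_cancel abs_square_less_1)
qed

lemma lambda2_eq_square:
  "lambda2 \<gamma> \<zeta> \<Delta> s =
     ((\<bar>Omega \<gamma> \<zeta> \<Delta> s\<bar> + csqrt (of_real ((Omega \<gamma> \<zeta> \<Delta> s)\<^sup>2 - 4 * \<Delta>))) / 2)\<^sup>2"
proof -
  define \<Omega> where "\<Omega> = Omega \<gamma> \<zeta> \<Delta> s"
  define r where "r = csqrt (of_real (\<Omega>\<^sup>2 - 4 * \<Delta>))"
  have abs2: "(of_real \<bar>\<Omega>\<bar>)\<^sup>2 = (of_real (\<Omega>\<^sup>2) :: complex)"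
    by (metis of_real_power power2_abs)
  have r2: "r\<^sup>2 = (of_real \<bar>\<Omega>\<bar>)\<^sup>2 - 4 * of_real \<Delta>" by (simp add: r_def abs2)
  have "lambda2 \<gamma> \<zeta> \<Delta> s = ((of_real \<bar>\<Omega>\<bar>)\<^sup>2 - 2 * of_real \<Delta> + of_real \<bar>\<Omega>\<bar> * r) / 2"
    unfolding lambda2_def Let_def \<Omega>_def[symmetric] r_def csqrt_of_real_square_mult abs2 by simp
  also have "\<dots> = ((of_real \<bar>\<Omega>\<bar> + r) / 2)\<^sup>2"
    by (simp add: power2_sum r2 field_simps)
  finally show ?thesis by (simp add: \<Omega>_def r_def)
qed

lemma cmod_lambda2_less_1:
  assumes "0 \<le> \<Delta>" "\<Delta> < 1" "\<bar>Omega \<gamma> \<zeta> \<Delta> s\<bar> < 1 + \<Delta>"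
  shows "cmod (lambda2 \<gamma> \<zeta> \<Delta> s) < 1"
proof -
  have "cmod ((\<bar>Omega \<gamma> \<zeta> \<Delta> s\<bar> + csqrt (of_real ((Omega \<gamma> \<zeta> \<Delta> s)\<^sup>2 - 4 * \<Delta>))) / 2) < 1"
    using cmod_quadratic_root_less_1[of \<Delta> "\<bar>Omega \<gamma> \<zeta> \<Delta> s\<bar>"] assms by simp
  then show ?thesis
    by (simp add: lambda2_eq_square norm_power power_less_one_iff)
qed

lemma abs_Omega_less:
  assumes "0 < \<gamma> * \<zeta> * s" "\<gamma> * \<zeta> * s < 2 * (1 + \<Delta>)"
  shows "\<bar>Omega \<gamma> \<zeta> \<Delta> s\<bar> < 1 + \<Delta>"
  using assms by (simp add: Omega_def abs_less_iff)

theorem proposition13: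
  fixes A :: "real^'d^'n" and \<gamma> \<zeta> \<Delta> :: real
  assumes "0 < \<zeta>" and "\<zeta> \<le> 1"
    and "0 \<le> \<Delta>" and "\<Delta> < 1"
    and "0 < \<gamma>" and "\<gamma> < 2 * (1 + \<Delta>) / (\<zeta> * sigma_max_sq A)"
  shows "lambda2_max A \<gamma> \<zeta> \<Delta> < 1"
proof -
  define S where "S = {s. is_eigenvalue (A ** transpose A) s}"
  define m where "m = sigma_max_sq A"
  have sym: "transpose (A ** transpose A) = A ** transpose A"
    by (simp add: matrix_transpose_mul)
  have "finite S" "S \<noteq> {}"
    using finite_eigenvalues_symmetric_matrix[OF sym] symmetric_matrix_has_eigenvalue[OF sym]
    by (auto simp: S_def)
  then have "m \<in> S" and le_m: "\<And>s. s \<in> S \<Longrightarrow> s \<le> m"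
    unfolding m_def sigma_max_sq_def S_def[symmetric] by auto
  have "0 < \<zeta> * m"
    using assms(3,5,6) less_trans[OF assms(5,6)] by (simp add: m_def zero_less_divide_iff)
  then have "0 < m" and "\<gamma> * \<zeta> * m < 2 * (1 + \<Delta>)"
    using assms(1,6) by (simp_all add: m_def less_divide_eq zero_less_mult_iff mult.assoc)
  have "cmod (lambda2 \<gamma> \<zeta> \<Delta> s) < 1" if "s \<in> S" "0 < s" for s
  proof (intro cmod_lambda2_less_1 abs_Omega_less)
    show "0 < \<gamma> * \<zeta> * s" using that assms by simp
    have "\<gamma> * \<zeta> * s \<le> \<gamma> * \<zeta> * m" using le_m[OF that(1)] assms by simp
    with \<open>\<gamma> * \<zeta> * m < 2 * (1 + \<Delta>)\<close> show "\<gamma> * \<zeta> * s < 2 * (1 + \<Delta>)" by linarith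
  qed (use assms in auto)
  moreover have "m \<in> {s \<in> S. 0 < s}" using \<open>m \<in> S\<close> \<open>0 < m\<close> by simp
  moreover have "{s. is_eigenvalue (A ** transpose A) s \<and> s > 0} = {s \<in> S. 0 < s}"
    by (simp add: S_def)
  ultimately show ?thesis
    using \<open>finite S\<close> unfolding lambda2_max_def by (subst Max_less_iff) auto
qed

end
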